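(* Let $a>b\ge 1$ be integers, $n=a+b$, and let $\breve{K}_{a,b}$ be the Mycielskian of the complete bipartite graph $K_{a,b}$. Then $$E_{\chi}(\breve{K}_{a,b})=1+\frac{2(b+1)}{2n+1},\qquad V_{\chi}(\breve{K}_{a,b})=\frac{16a^2+4b^2+8a^2b+8b^2a+24ab+8a+2b}{(2n+1)^3}.$$
   Context: Mycielskian: for a graph $G$ with vertex set $\{v_1,\dots,v_m\}$, its Mycielskian $\breve{G}$ is the graph with vertex set $\{v_1,\dots,v_m\}\cup\{u_1,\dots,u_m\}\cup\{u\}$ (all new, distinct vertices) whose edges are: all edges of $G$; the edge $u_iv_j$ whenever $v_iv_j$ is an edge of $G$; and the edges $uu_i$ for all $i$. Colouring parameters: for a proper colouring $\mathcal{C}=\{c_1,\dots,c_k\}$ of $G$ with colours indexed $1,\dots,k$, let $\theta(c_i)$ be the number of vertices of colour $c_i$ and $f(i)=\theta(c_i)/|V(G)|$. The colouring mean is $\mu_{\mathcal{C}}=\sum_i i\,f(i)$, the colouring variance is $\sum_i (i-\mu_{\mathcal{C}})^2 f(i)$, and the colouring sum is $\sum_i i\,\theta(c_i)$. The $\chi$-chromatic mean $E_\chi(G)$ (resp. $\chi$-chromatic variance $V_\chi(G)$) is the colouring mean (resp. variance) of a proper colouring of $G$ with exactly $\chi(G)$ colours $c_1,\dots,c_{\chi(G)}$ whose colouring sum is minimum among all such colourings. *)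

theory Defs
  imports Main Complex_Main
begin

text \<open>A finite simple graph is a pair (V, E) with E a set of 2-element subsets of V.\<close>
type_synonym 'v graph = "'v set \<times> 'v set set"

definition verts :: "'v graph \<Rightarrow> 'v set" where "verts G = fst G"
definition edges :: "'v graph \<Rightarrow> 'v set set" where "edges G = snd G"

definition proper_colouring :: "'v graph \<Rightarrow> nat \<Rightarrow> ('v \<Rightarrow> nat) \<Rightarrow> bool" where
  "proper_colouring G k f \<longleftrightarrow>
     (\<forall>v\<in>verts G. f v \<in> {1..k}) \<and>
     (\<forall>x y. {x, y} \<in> edges G \<longrightarrow> x \<noteq> y \<longrightarrow> f x \<noteq> f y)"

definition chromatic_number :: "'v graph \<Rightarrow> nat" where
  "chromatic_number G = (LEAST k. \<exists>f. proper_colouring G k f)"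

definition colour_class_size :: "'v graph \<Rightarrow> ('v \<Rightarrow> nat) \<Rightarrow> nat \<Rightarrow> nat" where
  "colour_class_size G f i = card {v \<in> verts G. f v = i}"

definition colour_freq :: "'v graph \<Rightarrow> ('v \<Rightarrow> nat) \<Rightarrow> nat \<Rightarrow> real" where
  "colour_freq G f i = real (colour_class_size G f i) / real (card (verts G))"

definition colouring_mean :: "'v graph \<Rightarrow> nat \<Rightarrow> ('v \<Rightarrow> nat) \<Rightarrow> real" where
  "colouring_mean G k f = (\<Sum>i=1..k. real i * colour_freq G f i)"

definition colouring_variance :: "'v graph \<Rightarrow> nat \<Rightarrow> ('v \<Rightarrow> nat) \<Rightarrow> real" where
  "colouring_variance G k f =
     (\<Sum>i=1..k. (real i - colouring_mean G k f)^2 * colour_freq G f i)"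

definition colouring_sum :: "'v graph \<Rightarrow> nat \<Rightarrow> ('v \<Rightarrow> nat) \<Rightarrow> nat" where
  "colouring_sum G k f = (\<Sum>i=1..k. i * colour_class_size G f i)"

definition min_chi_colouring :: "'v graph \<Rightarrow> ('v \<Rightarrow> nat) \<Rightarrow> bool" where
  "min_chi_colouring G f \<longleftrightarrow>
     proper_colouring G (chromatic_number G) f \<and>
     (\<forall>g. proper_colouring G (chromatic_number G) g \<longrightarrow>
          colouring_sum G (chromatic_number G) f \<le> colouring_sum G (chromatic_number G) g)"

definition chi_mean :: "'v graph \<Rightarrow> real" where
  "chi_mean G = colouring_mean G (chromatic_number G) (SOME f. min_chi_colouring G f)"

definition chi_variance :: "'v graph \<Rightarrow> real" where
  "chi_variance G = colouring_variance G (chromatic_number G) (SOME f. min_chi_colouring G f)"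

datatype 'v myc_vertex = Old 'v | Shadow 'v | Apex

definition mycielskian :: "'v graph \<Rightarrow> 'v myc_vertex graph" where
  "mycielskian G =
     (Old ` verts G \<union> Shadow ` verts G \<union> {Apex},
      {{Old x, Old y} | x y. {x, y} \<in> edges G} \<union>
      {{Shadow x, Old y} | x y. {x, y} \<in> edges G} \<union>
      {{Apex, Shadow x} | x. x \<in> verts G})"

definition complete_bipartite :: "nat \<Rightarrow> nat \<Rightarrow> (nat + nat) graph" where
  "complete_bipartite a b =
     (Inl ` {..<a} \<union> Inr ` {..<b},
      {{Inl i, Inr j} | i j. i < a \<and> j < b})"

end

theory Submission imports Defs begin

text \<open>Colouring the old and the shadow copy of each side of \<open>K(a,b)\<close> by 1 and 2 and
the apex by 3 gives a 3-colouring with class sizes \<open>2a, 2b, 1\<close>. The 5-cycle through the apex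
rules out 2-colourings, so \<open>\<chi> = 3\<close> and every 3-colouring uses colour 3; and since the
Mycielskian is covered by \<open>2a\<close> cliques, every colour class has at most \<open>2a\<close> vertices.
The colour sum of a 3-colouring of an \<open>N\<close>-vertex graph equals \<open>2N - \<theta>(c\<^sub>1) + \<theta>(c\<^sub>3)\<close>,
so a minimum-sum \<open>\<chi>\<close>-colouring has exactly the class sizes \<open>2a, 2b, 1\<close>, and the mean and
variance are computed from these.\<close>

lemma sum_colour_class_size:
  assumes "finite (verts G)" "proper_colouring G k f"
  shows "(\<Sum>i=1..k. colour_class_size G f i) = card (verts G)"
proof -
  have "f ` verts G \<subseteq> {1..k}" using assms(2) by (auto simp: proper_colouring_def)
  from sum.group[OF assms(1) _ this, of "\<lambda>_. 1 :: nat"] show ?thesis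
    by (simp add: colour_class_size_def)
qed

lemma colouring_mean_eq_colouring_sum:
  "colouring_mean G k f = real (colouring_sum G k f) / real (card (verts G))"
  by (simp add: colouring_mean_def colouring_sum_def colour_freq_def sum_divide_distrib)

lemma sum_atLeastAtMost_1_3: "(\<Sum>i=1..3::nat. F i) = F 1 + F 2 + F 3"
proof -
  have "{1..3::nat} = {1, 2, 3}" by auto
  then show ?thesis by (simp add: ac_simps)
qed

lemma colouring_sum_3:
  assumes "finite (verts G)" "proper_colouring G 3 f"
  shows "colouring_sum G 3 f + colour_class_size G f 1 = 2 * card (verts G) + colour_class_size G f 3"
proof -
  have "(\<Sum>i=1..3. colour_class_size G f i) = card (verts G)"
    by (rule sum_colour_class_size[OF assms])
  then show ?thesis unfolding colouring_sum_def sum_atLeastAtMost_1_3 by simp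
qed

lemma proper_colouring_2_if_colour_3_unused:
  assumes "proper_colouring G 3 f" "finite (verts G)" "colour_class_size G f 3 = 0"
  shows "proper_colouring G 2 f"
proof -
  have "\<forall>v\<in>verts G. f v \<noteq> 3"
    using assms(2,3) by (auto simp: colour_class_size_def)
  with assms(1) show ?thesis by (fastforce simp: proper_colouring_def)
qed

lemma not_proper_colouring_2_five_cycle:
  assumes "distinct [v0, v1, v2, v3, v4]" "{v0, v1, v2, v3, v4} \<subseteq> verts G"
    and "{v0, v1} \<in> edges G" "{v1, v2} \<in> edges G" "{v2, v3} \<in> edges G"
        "{v3, v4} \<in> edges G" "{v4, v0} \<in> edges G"
  shows "\<not> proper_colouring G 2 f"
proof
  assume "proper_colouring G 2 f"
  then have "f v0 \<noteq> f v1" "f v1 \<noteq> f v2" "f v2 \<noteq> f v3" "f v3 \<noteq> f v4" "f v4 \<noteq> f v0"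
    and "f v0 \<in> {1..2}" "f v1 \<in> {1..2}" "f v2 \<in> {1..2}" "f v3 \<in> {1..2}" "f v4 \<in> {1..2}"
    using assms unfolding proper_colouring_def by auto
  then show False by auto
qed

lemma colour_class_size_le_clique_cover:
  assumes "proper_colouring G k f" "\<phi> ` verts G \<subseteq> S" "finite S"
    and "\<And>x y. x \<in> verts G \<Longrightarrow> y \<in> verts G \<Longrightarrow> x \<noteq> y \<Longrightarrow> \<phi> x = \<phi> y \<Longrightarrow> {x, y} \<in> edges G"
  shows "colour_class_size G f i \<le> card S"
proof -
  let ?C = "{v \<in> verts G. f v = i}"
  have "inj_on \<phi> ?C"
    using assms(1,4) by (fastforce simp: inj_on_def proper_colouring_def)
  then have "card ?C = card (\<phi> ` ?C)" by (simp add: card_image)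
  also have "\<dots> \<le> card S" using assms(2,3) by (intro card_mono) auto
  finally show ?thesis by (simp add: colour_class_size_def)
qed

definition mycielskian_lift :: "nat \<Rightarrow> ('v \<Rightarrow> nat) \<Rightarrow> 'v myc_vertex \<Rightarrow> nat" where
  "mycielskian_lift k f v = (case v of Old x \<Rightarrow> f x | Shadow x \<Rightarrow> f x | Apex \<Rightarrow> k + 1)"

lemma verts_mycielskian: "verts (mycielskian G) = Old ` verts G \<union> Shadow ` verts G \<union> {Apex}"
  by (simp add: mycielskian_def verts_def)

lemma finite_verts_mycielskian: "finite (verts G) \<Longrightarrow> finite (verts (mycielskian G))"
  by (simp add: verts_mycielskian)

lemma card_verts_mycielskian:
  assumes "finite (verts G)"
  shows "card (verts (mycielskian G)) = 2 * card (verts G) + 1"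
proof -
  have "card (Old ` verts G \<union> Shadow ` verts G \<union> {Apex}) = card (Old ` verts G \<union> Shadow ` verts G) + 1"
    using assms by (subst card_Un_disjoint) auto
  also have "card (Old ` verts G \<union> Shadow ` verts G) = card (Old ` verts G) + card (Shadow ` verts G)"
    using assms by (subst card_Un_disjoint) auto
  finally show ?thesis by (simp add: verts_mycielskian card_image inj_on_def)
qed

lemma mycielskian_edge_Old_Old: "{u, v} \<in> edges G \<Longrightarrow> {Old u, Old v} \<in> edges (mycielskian G)"
  unfolding mycielskian_def edges_def by auto

lemma mycielskian_edge_Old_Shadow: "{u, v} \<in> edges G \<Longrightarrow> {Old u, Shadow v} \<in> edges (mycielskian G)"
proof -
  assume "{u, v} \<in> edges G"
  then have "{v, u} \<in> edges G" by (simp add: insert_commute)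
  then have "{Shadow v, Old u} \<in> edges (mycielskian G)" unfolding mycielskian_def edges_def by auto
  then show ?thesis by (subst insert_commute)
qed

lemma mycielskian_edge_Apex_Shadow: "v \<in> verts G \<Longrightarrow> {Apex, Shadow v} \<in> edges (mycielskian G)"
  unfolding mycielskian_def edges_def verts_def by auto

lemma proper_colouring_mycielskian_lift:
  assumes "proper_colouring G k f" "\<And>x. {x} \<notin> edges G"
  shows "proper_colouring (mycielskian G) (k + 1) (mycielskian_lift k f)"
proof -
  have "f x \<noteq> f y \<and> f y \<noteq> f x" if "{x, y} \<in> edges G" for x y
    using assms that by (cases "x = y") (auto simp: proper_colouring_def insert_commute)
  with assms(1) show ?thesis
    unfolding proper_colouring_def
    by (auto simp: mycielskian_def verts_def edges_def mycielskian_lift_def doubleton_eq_iff)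
qed

lemma colour_class_size_mycielskian_lift:
  assumes "finite (verts G)" "i \<noteq> k + 1"
  shows "colour_class_size (mycielskian G) (mycielskian_lift k f) i = 2 * colour_class_size G f i"
proof -
  let ?C = "{v \<in> verts G. f v = i}"
  have "{v \<in> verts (mycielskian G). mycielskian_lift k f v = i} = Old ` ?C \<union> Shadow ` ?C"
    using assms(2) by (auto simp: verts_mycielskian mycielskian_lift_def)
  moreover have "card (Old ` ?C \<union> Shadow ` ?C) = 2 * card ?C"
    using assms(1) by (subst card_Un_disjoint) (auto simp: card_image inj_on_def)
  ultimately show ?thesis by (simp add: colour_class_size_def)
qed

lemma colour_class_size_mycielskian_lift_apex:
  assumes "proper_colouring G k f"
  shows "colour_class_size (mycielskian G) (mycielskian_lift k f) (k + 1) = 1"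
proof -
  have "{v \<in> verts (mycielskian G). mycielskian_lift k f v = k + 1} = {Apex}"
    using assms by (fastforce simp: verts_mycielskian mycielskian_lift_def proper_colouring_def)
  then show ?thesis by (simp add: colour_class_size_def)
qed

definition bipartition_colouring :: "nat + nat \<Rightarrow> nat" where
  "bipartition_colouring = case_sum (\<lambda>_. 1) (\<lambda>_. 2)"

lemma verts_complete_bipartite: "verts (complete_bipartite a b) = Inl ` {..<a} \<union> Inr ` {..<b}"
  by (simp add: complete_bipartite_def verts_def)

lemma finite_verts_complete_bipartite: "finite (verts (complete_bipartite a b))"
  by (simp add: verts_complete_bipartite)

lemma card_verts_complete_bipartite: "card (verts (complete_bipartite a b)) = a + b"
  unfolding verts_complete_bipartite by (subst card_Un_disjoint) (auto simp: card_image)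

lemma complete_bipartite_edge: "i < a \<Longrightarrow> j < b \<Longrightarrow> {Inl i, Inr j} \<in> edges (complete_bipartite a b)"
  by (auto simp: complete_bipartite_def edges_def)

lemma complete_bipartite_loopless: "{x} \<notin> edges (complete_bipartite a b)"
  by (auto simp: complete_bipartite_def edges_def doubleton_eq_iff)

lemma proper_colouring_bipartition_colouring:
  "proper_colouring (complete_bipartite a b) 2 bipartition_colouring"
  by (auto simp: proper_colouring_def complete_bipartite_def verts_def edges_def
      bipartition_colouring_def doubleton_eq_iff)

lemma colour_class_size_bipartition_colouring:
  "colour_class_size (complete_bipartite a b) bipartition_colouring 1 = a"
  "colour_class_size (complete_bipartite a b) bipartition_colouring 2 = b"
proof -
  have "{v \<in> verts (complete_bipartite a b). bipartition_colouring v = 1} = Inl ` {..<a}"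
    "{v \<in> verts (complete_bipartite a b). bipartition_colouring v = 2} = Inr ` {..<b}"
    by (auto simp: verts_complete_bipartite bipartition_colouring_def)
  then show "colour_class_size (complete_bipartite a b) bipartition_colouring 1 = a"
    "colour_class_size (complete_bipartite a b) bipartition_colouring 2 = b"
    by (simp_all add: colour_class_size_def card_image)
qed

lemma verts_mycielskian_complete_bipartite:
  "verts (mycielskian (complete_bipartite a b)) =
     Old ` (Inl ` {..<a} \<union> Inr ` {..<b}) \<union> Shadow ` (Inl ` {..<a} \<union> Inr ` {..<b}) \<union> {Apex}"
  by (simp add: verts_mycielskian verts_complete_bipartite)

lemma not_proper_colouring_2_mycielskian_complete_bipartite:
  assumes "1 \<le> b" "1 \<le> a"
  shows "\<not> proper_colouring (mycielskian (complete_bipartite a b)) 2 f"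
proof (rule not_proper_colouring_2_five_cycle)
  have K: "{Inl 0, Inr 0} \<in> edges (complete_bipartite a b)" "{Inr 0, Inl 0} \<in> edges (complete_bipartite a b)"
    using assms complete_bipartite_edge[of 0 a 0 b] by (simp_all add: insert_commute)
  show "{Apex, Shadow (Inl 0)} \<in> edges (mycielskian (complete_bipartite a b))"
    using assms by (intro mycielskian_edge_Apex_Shadow) (simp add: verts_complete_bipartite)
  show "{Shadow (Inl 0), Old (Inr 0)} \<in> edges (mycielskian (complete_bipartite a b))"
    using mycielskian_edge_Old_Shadow[OF K(2)] by (simp add: insert_commute)
  show "{Old (Inr 0), Old (Inl 0)} \<in> edges (mycielskian (complete_bipartite a b))"
    using K(2) by (rule mycielskian_edge_Old_Old)
  show "{Old (Inl 0), Shadow (Inr 0)} \<in> edges (mycielskian (complete_bipartite a b))"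
    using K(1) by (rule mycielskian_edge_Old_Shadow)
  show "{Shadow (Inr 0), Apex} \<in> edges (mycielskian (complete_bipartite a b))"
    using assms mycielskian_edge_Apex_Shadow[of "Inr 0" "complete_bipartite a b"]
    by (simp add: insert_commute verts_complete_bipartite)
qed (use assms in \<open>auto simp: verts_mycielskian_complete_bipartite\<close>)

text \<open>The fibres of this map are the \<open>2a\<close> cliques \<open>{Old (Inl i), Shadow (Inr i)}\<close> and
\<open>{Shadow (Inl i), Old (Inr i)}\<close> for \<open>i < b\<close>, \<open>{Shadow (Inl b), Apex}\<close> (an edge since \<open>b < a\<close>)
and singletons.\<close>

fun clique_cover_index :: "nat \<Rightarrow> (nat + nat) myc_vertex \<Rightarrow> bool \<times> nat" where
  "clique_cover_index b (Old (Inl i)) = (False, i)"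
| "clique_cover_index b (Shadow (Inr j)) = (False, j)"
| "clique_cover_index b (Shadow (Inl i)) = (True, i)"
| "clique_cover_index b (Old (Inr j)) = (True, j)"
| "clique_cover_index b Apex = (True, b)"

lemma clique_cover_index_edge:
  assumes "b < a" "x \<in> verts (mycielskian (complete_bipartite a b))"
    "y \<in> verts (mycielskian (complete_bipartite a b))" "x \<noteq> y"
    "clique_cover_index b x = clique_cover_index b y"
  shows "{x, y} \<in> edges (mycielskian (complete_bipartite a b))"
proof -
  have "{Inl i, Inr i} \<in> edges (complete_bipartite a b)" "{Inr i, Inl i} \<in> edges (complete_bipartite a b)"
    if "i < b" for i
    using that assms(1) complete_bipartite_edge[of i a i b] by (simp_all add: insert_commute)
  with assms show ?thesis
    by (cases "(b, x)" rule: clique_cover_index.cases; cases "(b, y)" rule: clique_cover_index.cases)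
      (auto simp: verts_mycielskian_complete_bipartite insert_commute verts_complete_bipartite
        intro: mycielskian_edge_Old_Shadow mycielskian_edge_Apex_Shadow)
qed

lemma colour_class_size_mycielskian_complete_bipartite_le:
  assumes "b < a" "proper_colouring (mycielskian (complete_bipartite a b)) k g"
  shows "colour_class_size (mycielskian (complete_bipartite a b)) g i \<le> 2 * a"
proof -
  let ?S = "UNIV \<times> {..<a} :: (bool \<times> nat) set"
  have cover: "clique_cover_index b ` verts (mycielskian (complete_bipartite a b)) \<subseteq> ?S"
    using assms(1) by (auto simp: verts_mycielskian_complete_bipartite)
  have "colour_class_size (mycielskian (complete_bipartite a b)) g i \<le> card ?S"
    by (rule colour_class_size_le_clique_cover[OF assms(2) cover _ clique_cover_index_edge[OF assms(1)]])
      simp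
  also have "card ?S = 2 * a" by (simp add: card_cartesian_product)
  finally show ?thesis .
qed

lemma colour_class_size_mycielskian_complete_bipartite_3:
  assumes "1 \<le> b" "b < a" "proper_colouring (mycielskian (complete_bipartite a b)) 3 g"
  shows "1 \<le> colour_class_size (mycielskian (complete_bipartite a b)) g 3"
proof (rule ccontr)
  assume "\<not> 1 \<le> colour_class_size (mycielskian (complete_bipartite a b)) g 3"
  then have "proper_colouring (mycielskian (complete_bipartite a b)) 2 g"
    by (intro proper_colouring_2_if_colour_3_unused[OF assms(3)])
      (simp_all add: finite_verts_mycielskian finite_verts_complete_bipartite)
  with assms(1,2) show False using not_proper_colouring_2_mycielskian_complete_bipartite by simp
qed

lemma proper_colouring_mycielskian_lift_bipartition:
  "proper_colouring (mycielskian (complete_bipartite a b)) 3 (mycielskian_lift 2 bipartition_colouring)"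
  using proper_colouring_mycielskian_lift[OF proper_colouring_bipartition_colouring complete_bipartite_loopless]
  by simp

lemma chromatic_number_mycielskian_complete_bipartite:
  assumes "1 \<le> b" "b < a"
  shows "chromatic_number (mycielskian (complete_bipartite a b)) = 3"
  unfolding chromatic_number_def
proof (rule Least_equality)
  show "\<exists>f. proper_colouring (mycielskian (complete_bipartite a b)) 3 f"
    using proper_colouring_mycielskian_lift_bipartition by blast
next
  fix k assume "\<exists>f. proper_colouring (mycielskian (complete_bipartite a b)) k f"
  then obtain f where f: "proper_colouring (mycielskian (complete_bipartite a b)) k f" ..
  show "3 \<le> k"
  proof (rule ccontr)
    assume "\<not> 3 \<le> k"
    with f have "proper_colouring (mycielskian (complete_bipartite a b)) 2 f"
      by (auto simp: proper_colouring_def)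
    with assms show False using not_proper_colouring_2_mycielskian_complete_bipartite by simp
  qed
qed

lemma colour_class_size_mycielskian_lift_bipartition:
  "colour_class_size (mycielskian (complete_bipartite a b)) (mycielskian_lift 2 bipartition_colouring) 1 = 2 * a"
  "colour_class_size (mycielskian (complete_bipartite a b)) (mycielskian_lift 2 bipartition_colouring) 2 = 2 * b"
  "colour_class_size (mycielskian (complete_bipartite a b)) (mycielskian_lift 2 bipartition_colouring) 3 = 1"
  using colour_class_size_mycielskian_lift[OF finite_verts_complete_bipartite, where k = 2]
    colour_class_size_mycielskian_lift_apex[OF proper_colouring_bipartition_colouring[of a b]]
  by (simp_all add: colour_class_size_bipartition_colouring[simplified])

lemma card_verts_mycielskian_complete_bipartite:
  "card (verts (mycielskian (complete_bipartite a b))) = 2 * (a + b) + 1"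
  by (simp add: card_verts_mycielskian finite_verts_complete_bipartite card_verts_complete_bipartite)

lemma colouring_sum_mycielskian_complete_bipartite:
  assumes "proper_colouring (mycielskian (complete_bipartite a b)) 3 g"
  shows "colouring_sum (mycielskian (complete_bipartite a b)) 3 g
           + colour_class_size (mycielskian (complete_bipartite a b)) g 1
         = 4 * (a + b) + 2 + colour_class_size (mycielskian (complete_bipartite a b)) g 3"
  using colouring_sum_3[OF finite_verts_mycielskian[OF finite_verts_complete_bipartite] assms]
  by (simp add: card_verts_mycielskian_complete_bipartite)

lemma colouring_sum_mycielskian_lift_bipartition:
  "colouring_sum (mycielskian (complete_bipartite a b)) 3 (mycielskian_lift 2 bipartition_colouring)
     = 2 * a + 4 * b + 3"
  using colouring_sum_mycielskian_complete_bipartite[OF proper_colouring_mycielskian_lift_bipartition[of a b]]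
  unfolding colour_class_size_mycielskian_lift_bipartition by simp

lemma colouring_sum_mycielskian_complete_bipartite_ge:
  assumes "1 \<le> b" "b < a" "proper_colouring (mycielskian (complete_bipartite a b)) 3 g"
  shows "2 * a + 4 * b + 3 \<le> colouring_sum (mycielskian (complete_bipartite a b)) 3 g"
  using colouring_sum_mycielskian_complete_bipartite[OF assms(3)]
    colour_class_size_mycielskian_complete_bipartite_le[OF assms(2,3), of 1]
    colour_class_size_mycielskian_complete_bipartite_3[OF assms]
  by simp

lemma min_chi_colouring_mycielskian_lift_bipartition:
  assumes "1 \<le> b" "b < a"
  shows "min_chi_colouring (mycielskian (complete_bipartite a b)) (mycielskian_lift 2 bipartition_colouring)"
  unfolding min_chi_colouring_def chromatic_number_mycielskian_complete_bipartite[OF assms]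
    colouring_sum_mycielskian_lift_bipartition
  using proper_colouring_mycielskian_lift_bipartition colouring_sum_mycielskian_complete_bipartite_ge[OF assms]
  by blast

lemma colour_class_size_min_chi_colouring_mycielskian_complete_bipartite:
  assumes "1 \<le> b" "b < a" "min_chi_colouring (mycielskian (complete_bipartite a b)) g"
  shows "colour_class_size (mycielskian (complete_bipartite a b)) g 1 = 2 * a"
    "colour_class_size (mycielskian (complete_bipartite a b)) g 2 = 2 * b"
    "colour_class_size (mycielskian (complete_bipartite a b)) g 3 = 1"
proof -
  let ?M = "mycielskian (complete_bipartite a b)"
  have g: "proper_colouring ?M 3 g" "colouring_sum ?M 3 g \<le> 2 * a + 4 * b + 3"
    using assms(3) min_chi_colouring_mycielskian_lift_bipartition[OF assms(1,2)]
    unfolding min_chi_colouring_def chromatic_number_mycielskian_complete_bipartite[OF assms(1,2)]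
    by (auto simp: colouring_sum_mycielskian_lift_bipartition)
  note bounds = colouring_sum_mycielskian_complete_bipartite[OF g(1)]
    colour_class_size_mycielskian_complete_bipartite_le[OF assms(2) g(1), of 1]
    colour_class_size_mycielskian_complete_bipartite_3[OF assms(1,2) g(1)]
  show c1: "colour_class_size ?M g 1 = 2 * a" using bounds g(2) by presburger
  show c3: "colour_class_size ?M g 3 = 1" using bounds g(2) by presburger
  have "(\<Sum>i=1..3. colour_class_size ?M g i) = 2 * (a + b) + 1"
    using sum_colour_class_size[OF finite_verts_mycielskian[OF finite_verts_complete_bipartite] g(1)]
    by (simp add: card_verts_mycielskian_complete_bipartite)
  then show "colour_class_size ?M g 2 = 2 * b"
    unfolding sum_atLeastAtMost_1_3 c1 c3 by simp
qed

lemma variance_of_class_sizes_2a_2b_1: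
  fixes a b N :: real
  assumes "N = 2 * a + 2 * b + 1" "N \<noteq> 0"
  defines "\<mu> \<equiv> (2 * a + 4 * b + 3) / N"
  shows "(1 - \<mu>)\<^sup>2 * (2 * a / N) + (2 - \<mu>)\<^sup>2 * (2 * b / N) + (3 - \<mu>)\<^sup>2 * (1 / N)
    = (16 * a ^ 2 + 4 * b ^ 2 + 8 * a ^ 2 * b + 8 * b ^ 2 * a + 24 * a * b + 8 * a + 2 * b) / N ^ 3"
proof -
  have "(1 - \<mu>)\<^sup>2 * (2 * a / N) + (2 - \<mu>)\<^sup>2 * (2 * b / N) + (3 - \<mu>)\<^sup>2 * (1 / N)
      = ((N - (2*a+4*b+3))\<^sup>2 * (2*a) + (2*N - (2*a+4*b+3))\<^sup>2 * (2*b) + (3*N - (2*a+4*b+3))\<^sup>2) / N ^ 3"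
    using assms(2) unfolding \<mu>_def by (simp add: field_simps power2_eq_square power3_eq_cube)
  also have "(N - (2*a+4*b+3))\<^sup>2 * (2*a) + (2*N - (2*a+4*b+3))\<^sup>2 * (2*b) + (3*N - (2*a+4*b+3))\<^sup>2
      = 16 * a ^ 2 + 4 * b ^ 2 + 8 * a ^ 2 * b + 8 * b ^ 2 * a + 24 * a * b + 8 * a + 2 * b"
    unfolding assms(1) by (simp add: power2_eq_square algebra_simps)
  finally show ?thesis .
qed

theorem theorem2p5:
  fixes a b :: nat
  assumes "b \<ge> 1" and "a > b"
  defines "n \<equiv> a + b"
  shows "chi_mean (mycielskian (complete_bipartite a b))
           = 1 + 2 * (real b + 1) / (2 * real n + 1) \<and>
         chi_variance (mycielskian (complete_bipartite a b))
           = (16 * real a ^ 2 + 4 * real b ^ 2 + 8 * real a ^ 2 * real b + 8 * real b ^ 2 * real a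
              + 24 * real a * real b + 8 * real a + 2 * real b) / (2 * real n + 1) ^ 3"
proof -
  let ?M = "mycielskian (complete_bipartite a b)"
  define g where "g = (SOME f. min_chi_colouring ?M f)"
  have "min_chi_colouring ?M g"
    unfolding g_def
    by (rule someI[where P = "min_chi_colouring ?M",
          OF min_chi_colouring_mycielskian_lift_bipartition[OF assms(1,2)]])
  note sizes = colour_class_size_min_chi_colouring_mycielskian_complete_bipartite[OF assms(1,2) this]
  have freq: "colour_freq ?M g i = real (colour_class_size ?M g i) / (2 * real n + 1)" for i
    by (simp add: colour_freq_def card_verts_mycielskian_complete_bipartite n_def)
  have "colouring_sum ?M 3 g = 2 * a + 4 * b + 3"
    unfolding colouring_sum_def sum_atLeastAtMost_1_3 sizes by simp
  then have mean: "colouring_mean ?M 3 g = (2 * real a + 4 * real b + 3) / (2 * real n + 1)"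
    by (simp add: colouring_mean_eq_colouring_sum card_verts_mycielskian_complete_bipartite n_def)
  have N: "2 * real n + 1 = 2 * real a + 2 * real b + 1" "2 * real n + 1 \<noteq> 0"
    by (simp_all add: n_def)
  have "colouring_mean ?M 3 g = 1 + 2 * (real b + 1) / (2 * real n + 1)"
    unfolding mean using N by (simp add: field_simps)
  moreover have "colouring_variance ?M 3 g
      = (16 * real a ^ 2 + 4 * real b ^ 2 + 8 * real a ^ 2 * real b + 8 * real b ^ 2 * real a
         + 24 * real a * real b + 8 * real a + 2 * real b) / (2 * real n + 1) ^ 3"
    unfolding colouring_variance_def sum_atLeastAtMost_1_3 mean freq sizes
    using variance_of_class_sizes_2a_2b_1[OF N] by simp
  ultimately show ?thesis
    unfolding chi_mean_def chi_variance_def g_def chromatic_number_mycielskian_complete_bipartite[OF assms(1,2)]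
    by simp
qed

end
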